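(* Let $\mathfrak K=(K,\bigsqcup,\odot,{}^*,{\sim},e)$ be an involutive generalized dynamic algebra, and define $\bullet\colon K\times\widetilde K\to\widetilde K$ by $k\bullet v={\sim}{\sim}(k\odot v)$. Then ${\sim}{\sim}{\sim}v={\sim}v$ for every $v\in K$, and $(\widetilde K,\bigvee,\bullet)$ is a left unital $K$-module (with $(\widetilde K,\preceq)$ a complete lattice whose joins are given by $\bigvee$), with least element ${\sim}{\sim}0$ and greatest element ${\sim}{\sim}1$.
   Context: An involutive unital quantale is $(Q,\bigsqcup,\odot,{}^*,e)$: $Q$ a complete join-semilattice (order $\sqsubseteq$, $0=\bigsqcup\emptyset$, $1=\bigsqcup Q$), $\odot$ associative and distributing over arbitrary joins in each argument, $e$ a two-sided unit, ${}^*$ with $x^{**}=x$, $(x\odot y)^*=y^*\odot x^*$, $(\bigsqcup_i x_i)^*=\bigsqcup_i x_i^*$. An involutive generalized dynamic algebra is $\mathfrak K=(K,\bigsqcup,\odot,{}^*,{\sim},e)$ with $(K,\bigsqcup,\odot,{}^*,e)$ an involutive unital quantale and ${\sim}\colon K\to K$ such that for all $x,y\in K$ and families $(x_i)_{i\in I}$: ${\sim}(x\odot{\sim}{\sim}y)={\sim}(x\odot y)$; ${\sim}(\bigsqcup_i{\sim}{\sim}x_i)={\sim}(\bigsqcup_i x_i)$; $({\sim}x)^*={\sim}x$; ${\sim}{\sim}({\sim}{\sim}x\odot y)={\sim}({\sim}x\sqcup{\sim}({\sim}x\sqcup y))$. Test set $\widetilde K=\{{\sim}k\mid k\in K\}$;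 for $W\subseteq\widetilde K$, $\bigvee W={\sim}{\sim}(\bigsqcup W)$; $k\preceq l$ iff $\bigvee\{k,l\}=l$. For a unital quantale $(Q,\bigsqcup,\odot,e)$, a left unital $Q$-module is a complete join-semilattice $(A,\bigvee)$ with a map $\bullet\colon Q\times A\to A$ such that $v\bullet\bigvee S=\bigvee_{s\in S}v\bullet s$, $(\bigsqcup T)\bullet a=\bigvee_{t\in T}t\bullet a$, $u\bullet(v\bullet a)=(u\odot v)\bullet a$, and $e\bullet a=a$. *)

theory Defs
  imports Main
begin

text \<open>The carrier K is modelled as a type 'a of class complete_lattice; the
quantale join is Sup (so the order is the lattice order, 0 = Sup {} = bot and
1 = Sup UNIV = top).  A complete join-semilattice structure on a type determines
the complete lattice uniquely.\<close>

definition involutive_unital_quantale ::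
  "('a::complete_lattice \<Rightarrow> 'a \<Rightarrow> 'a) \<Rightarrow> ('a \<Rightarrow> 'a) \<Rightarrow> 'a \<Rightarrow> bool" where
  "involutive_unital_quantale mult invl e \<longleftrightarrow>
     (\<forall>x y z. mult (mult x y) z = mult x (mult y z)) \<and>
     (\<forall>x Y. mult x (Sup Y) = Sup (mult x ` Y)) \<and>
     (\<forall>x Y. mult (Sup Y) x = Sup ((\<lambda>y. mult y x) ` Y)) \<and>
     (\<forall>x. mult e x = x \<and> mult x e = x) \<and>
     (\<forall>x. invl (invl x) = x) \<and>
     (\<forall>x y. invl (mult x y) = mult (invl y) (invl x)) \<and>
     (\<forall>X. invl (Sup X) = Sup (invl ` X))"

definition igda ::
  "('a::complete_lattice \<Rightarrow> 'a \<Rightarrow> 'a) \<Rightarrow> ('a \<Rightarrow> 'a) \<Rightarrow> ('a \<Rightarrow> 'a) \<Rightarrow> 'a \<Rightarrow> bool" where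
  "igda mult invl neg e \<longleftrightarrow>
     involutive_unital_quantale mult invl e \<and>
     (\<forall>x y. neg (mult x (neg (neg y))) = neg (mult x y)) \<and>
     (\<forall>X. neg (Sup ((\<lambda>x. neg (neg x)) ` X)) = neg (Sup X)) \<and>
     (\<forall>x. invl (neg x) = neg x) \<and>
     (\<forall>x y. neg (neg (mult (neg (neg x)) y)) = neg (sup (neg x) (neg (sup (neg x) y))))"

definition tests :: "('a \<Rightarrow> 'a) \<Rightarrow> 'a set" where
  "tests neg = range neg"

definition tjoin :: "('a::complete_lattice \<Rightarrow> 'a) \<Rightarrow> 'a set \<Rightarrow> 'a" where
  "tjoin neg W = neg (neg (Sup W))"

definition tle :: "('a::complete_lattice \<Rightarrow> 'a) \<Rightarrow> 'a \<Rightarrow> 'a \<Rightarrow> bool" where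
  "tle neg k l \<longleftrightarrow> tjoin neg {k, l} = l"

definition complete_join_semilattice :: "'b set \<Rightarrow> ('b set \<Rightarrow> 'b) \<Rightarrow> bool" where
  "complete_join_semilattice A J \<longleftrightarrow>
     (\<forall>W \<subseteq> A. J W \<in> A) \<and>
     (\<forall>x\<in>A. J {x, x} = x) \<and>
     (\<forall>x\<in>A. \<forall>y\<in>A. J {x, y} = y \<and> J {y, x} = x \<longrightarrow> x = y) \<and>
     (\<forall>x\<in>A. \<forall>y\<in>A. \<forall>z\<in>A. J {x, y} = y \<and> J {y, z} = z \<longrightarrow> J {x, z} = z) \<and>
     (\<forall>W \<subseteq> A. (\<forall>w\<in>W. J {w, J W} = J W) \<and>
                (\<forall>u\<in>A. (\<forall>w\<in>W. J {w, u} = u) \<longrightarrow> J {J W, u} = u))"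

definition left_unital_module ::
  "('a::complete_lattice \<Rightarrow> 'a \<Rightarrow> 'a) \<Rightarrow> 'a \<Rightarrow> 'b set \<Rightarrow> ('b set \<Rightarrow> 'b) \<Rightarrow> ('a \<Rightarrow> 'b \<Rightarrow> 'b) \<Rightarrow> bool" where
  "left_unital_module mult e A J act \<longleftrightarrow>
     complete_join_semilattice A J \<and>
     (\<forall>v a. a \<in> A \<longrightarrow> act v a \<in> A) \<and>
     (\<forall>v S. S \<subseteq> A \<longrightarrow> act v (J S) = J (act v ` S)) \<and>
     (\<forall>T a. a \<in> A \<longrightarrow> act (Sup T) a = J ((\<lambda>t. act t a) ` T)) \<and>
     (\<forall>u v a. a \<in> A \<longrightarrow> act u (act v a) = act (mult u v) a) \<and>
     (\<forall>a\<in>A. act e a = a)"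

end

theory Submission
  imports Defs
begin

text \<open>By the first axiom with \<open>x = e\<close>, \<open>\<sim>\<sim>\<sim>v = \<sim>v\<close>, so \<open>c = \<sim>\<sim>\<close> is idempotent with
image the test set, and the second and first axioms say that \<open>c\<close> absorbs inner applications
of itself under joins and under right factors: \<open>c(\<Squnion>c x\<^sub>i) = c(\<Squnion>x\<^sub>i)\<close> and
\<open>c(x \<odot> c y) = c(x \<odot> y)\<close>. Any idempotent map with the first property turns its image,
with \<open>c \<circ> \<Squnion>\<close> as join, into a complete join-semilattice whose least and greatest
elements are \<open>c 0\<close> and \<open>c 1\<close>; the second property makes \<open>k \<bullet> v = c(k \<odot> v)\<close> a
module action, each module law being the corresponding quantale law followed by \<open>c\<close>.\<close>

lemma Sup_insert_image_sup:
  fixes u :: "'a::complete_lattice"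
  shows "Sup (insert u ((\<lambda>w. sup w u) ` W)) = sup (Sup W) u"
proof (rule antisym)
  show "Sup (insert u ((\<lambda>w. sup w u) ` W)) \<le> sup (Sup W) u"
    by (auto intro!: Sup_least simp: Sup_upper le_supI1)
  show "sup (Sup W) u \<le> Sup (insert u ((\<lambda>w. sup w u) ` W))"
  proof (intro sup_least Sup_least)
    fix w assume "w \<in> W"
    then show "w \<le> Sup (insert u ((\<lambda>w. sup w u) ` W))"
      by (meson Sup_upper2 image_eqI insertI2 sup_ge1)
  qed (simp add: Sup_upper)
qed

locale Sup_retraction =
  fixes f :: "'a::complete_lattice \<Rightarrow> 'a"
  assumes idem: "f (f x) = f x"
    and Sup_image: "f (Sup (f ` X)) = f (Sup X)"
begin

lemma fixed_on_range: "x \<in> range f \<Longrightarrow> f x = x"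
  using idem by auto

lemma sup_image: "f (sup (f a) (f b)) = f (sup a b)"
  using Sup_image[of "{a, b}"] by simp

lemma sup_image_right:
  assumes "x \<in> range f"
  shows "f (sup x (f b)) = f (sup x b)"
  using sup_image[of x b] fixed_on_range[OF assms] by simp

lemma complete_join_semilattice_range:
  "complete_join_semilattice (range f) (\<lambda>W. f (Sup W))"
  unfolding complete_join_semilattice_def
proof (intro conjI ballI allI impI)
  fix x assume "x \<in> range f"
  then have "f x = x" by (rule fixed_on_range)
  then show "f (Sup {x, x}) = x" by simp
next
  fix x y assume "f (Sup {x, y}) = y \<and> f (Sup {y, x}) = x"
  then show "x = y" by (metis insert_commute)
next
  fix x y z assume x: "x \<in> range f" and z: "z \<in> range f"
    and xy: "f (Sup {x, y}) = y \<and> f (Sup {y, z}) = z"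
  have "f (sup x z) = f (sup x (sup y z))"
    using sup_image_right[OF x, of "sup y z"] xy by simp
  also have "\<dots> = f (sup (f (sup x y)) (f z))"
    by (simp add: sup_image sup_assoc)
  also have "\<dots> = z"
    using xy fixed_on_range[OF z] by simp
  finally show "f (Sup {x, z}) = z" by simp
next
  fix W w assume "w \<in> W" "W \<subseteq> range f"
  then have "f (sup w (f (Sup W))) = f (sup w (Sup W))"
    using sup_image_right by blast
  with \<open>w \<in> W\<close> show "f (Sup {w, f (Sup W)}) = f (Sup W)"
    by (simp add: Sup_upper sup_absorb2)
next
  fix W u assume u: "u \<in> range f" and ub: "\<forall>w\<in>W. f (Sup {w, u}) = u"
  let ?X = "insert u ((\<lambda>w. sup w u) ` W)"
  have fu: "f u = u"
    using u by (rule fixed_on_range)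
  have "f ` ?X = {u}"
    using ub fu by auto
  then have "f (Sup ?X) = u"
    using Sup_image[of ?X] fu by (metis ccpo_Sup_singleton)
  then have "f (sup (Sup W) u) = u"
    by (simp only: Sup_insert_image_sup)
  then show "f (Sup {f (Sup W), u}) = u"
    using sup_image[of "Sup W" u] fu by simp
qed (rule rangeI)

lemma Sup_empty_least:
  assumes "v \<in> range f"
  shows "f (Sup {f (Sup {}), v}) = v"
  using sup_image[of "Sup {}" v] fixed_on_range[OF assms] by simp

lemma Sup_UNIV_greatest:
  assumes "v \<in> range f"
  shows "f (Sup {v, f (Sup UNIV)}) = f (Sup UNIV)"
  using sup_image_right[OF assms, of "Sup UNIV"] by simp

lemma left_unital_module_range:
  fixes mult :: "'a \<Rightarrow> 'a \<Rightarrow> 'a"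
  assumes assoc: "\<And>x y z. mult (mult x y) z = mult x (mult y z)"
    and Sup_right: "\<And>x Y. mult x (Sup Y) = Sup (mult x ` Y)"
    and Sup_left: "\<And>x Y. mult (Sup Y) x = Sup ((\<lambda>y. mult y x) ` Y)"
    and unit: "\<And>x. mult e x = x"
    and mult_image: "\<And>x y. f (mult x (f y)) = f (mult x y)"
  shows "left_unital_module mult e (range f) (\<lambda>W. f (Sup W)) (\<lambda>k v. f (mult k v))"
  unfolding left_unital_module_def
proof (intro conjI allI impI ballI complete_join_semilattice_range)
  fix v S
  have "f (mult v (f (Sup S))) = f (Sup (f ` mult v ` S))"
    by (simp add: mult_image Sup_right Sup_image)
  then show "f (mult v (f (Sup S))) = f (Sup ((\<lambda>a. f (mult v a)) ` S))"
    by (simp add: image_image)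
next
  fix T a
  have "f (mult (Sup T) a) = f (Sup (f ` (\<lambda>t. mult t a) ` T))"
    by (simp add: Sup_left Sup_image)
  then show "f (mult (Sup T) a) = f (Sup ((\<lambda>t. f (mult t a)) ` T))"
    by (simp add: image_image)
next
  fix u v a
  show "f (mult u (f (mult v a))) = f (mult (mult u v) a)"
    by (simp add: mult_image assoc)
next
  fix a assume "a \<in> range f"
  then have "f a = a" by (rule fixed_on_range)
  then show "f (mult e a) = a" by (simp add: unit)
qed simp

end

lemma igda_neg_mult_negneg:
  "igda mult invl neg e \<Longrightarrow> neg (mult x (neg (neg y))) = neg (mult x y)"
  unfolding igda_def by blast

lemma igda_neg_Sup_negneg:
  "igda mult invl neg e \<Longrightarrow> neg (Sup ((\<lambda>x. neg (neg x)) ` X)) = neg (Sup X)"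
  unfolding igda_def by blast

lemma igda_quantale:
  "igda mult invl neg e \<Longrightarrow> involutive_unital_quantale mult invl e"
  unfolding igda_def by blast

lemma igda_neg_triple:
  assumes "igda mult invl neg e"
  shows "neg (neg (neg v)) = neg v"
proof -
  have "\<And>x. mult e x = x"
    using igda_quantale[OF assms] unfolding involutive_unital_quantale_def by blast
  then show ?thesis
    using igda_neg_mult_negneg[OF assms, of e v] by simp
qed

lemma igda_Sup_retraction:
  assumes "igda mult invl neg e"
  shows "Sup_retraction (\<lambda>x. neg (neg x))"
proof
  show "neg (neg (neg (neg x))) = neg (neg x)" for x
    by (simp add: igda_neg_triple[OF assms])
  show "neg (neg (Sup ((\<lambda>x. neg (neg x)) ` X))) = neg (neg (Sup X))" for X
    by (simp add: igda_neg_Sup_negneg[OF assms])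
qed

lemma tests_eq_range_negneg:
  assumes "\<And>v. neg (neg (neg v)) = neg v"
  shows "tests neg = range (\<lambda>x. neg (neg x))"
proof
  show "tests neg \<subseteq> range (\<lambda>x. neg (neg x))"
    unfolding tests_def using assms by (metis image_subsetI rangeI)
qed (auto simp: tests_def)

lemma tjoin_eq: "tjoin neg = (\<lambda>W. neg (neg (Sup W)))"
  by (simp add: tjoin_def fun_eq_iff)

theorem theorem3p3:
  fixes mult :: "'a::complete_lattice \<Rightarrow> 'a \<Rightarrow> 'a"
    and invl neg :: "'a \<Rightarrow> 'a" and e :: 'a
  assumes "igda mult invl neg e"
  shows "(\<forall>v. neg (neg (neg v)) = neg v)
    \<and> left_unital_module mult e (tests neg) (tjoin neg) (\<lambda>k v. neg (neg (mult k v)))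
    \<and> neg (neg (Sup {})) \<in> tests neg \<and> neg (neg (Sup UNIV)) \<in> tests neg
    \<and> (\<forall>v \<in> tests neg. tle neg (neg (neg (Sup {}))) v \<and> tle neg v (neg (neg (Sup UNIV))))"
proof -
  interpret Sup_retraction "\<lambda>x. neg (neg x)"
    using igda_Sup_retraction[OF assms] .
  have triple: "\<forall>v. neg (neg (neg v)) = neg v"
    using igda_neg_triple[OF assms] by blast
  then have tests: "tests neg = range (\<lambda>x. neg (neg x))"
    by (simp add: tests_eq_range_negneg)
  have module: "left_unital_module mult e (tests neg) (tjoin neg) (\<lambda>k v. neg (neg (mult k v)))"
    unfolding tests tjoin_eq
  proof (rule left_unital_module_range)
    show "neg (neg (mult x (neg (neg y)))) = neg (neg (mult x y))" for x y
      by (simp add: igda_neg_mult_negneg[OF assms])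
  qed (use igda_quantale[OF assms] in \<open>simp_all add: involutive_unital_quantale_def\<close>)
  have bounds: "tle neg (neg (neg (Sup {}))) v \<and> tle neg v (neg (neg (Sup UNIV)))"
    if "v \<in> tests neg" for v
    using that unfolding tests tle_def tjoin_def
    by (intro conjI Sup_empty_least Sup_UNIV_greatest)
  have "neg (neg (Sup {})) \<in> tests neg" "neg (neg (Sup UNIV)) \<in> tests neg"
    unfolding tests_def by (rule rangeI)+
  with triple module bounds show ?thesis
    by (intro conjI ballI) auto
qed

end
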